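(* Let $\mu$ be a singular strong limit cardinal, let $\mathbf K$ be either the class of locally finite groups or a universal class whose vocabulary has cardinality $<\mu$, and let $N\in\mathbf K$ have cardinality $\mu$. Then the set $$\mathrm{IDC}_{<\mu}(N)=\{M : M\subseteq N,\ M\in\mathbf K,\ |M|<\mu,\ M \text{ is } {\rm cf}(\mu)\text{-indecomposable}\}$$ has cardinality at most $\mu$.
   Context: A universal class $\mathbf K$ is a class of $\tau$-structures closed under isomorphism such that a $\tau$-structure belongs to $\mathbf K$ iff each of its finitely generated substructures does; $M\subseteq N$ means $M$ is a substructure of $N$. The class of locally finite groups (groups all of whose finitely generated subgroups are finite) is such a class in the group vocabulary, with substructures being subgroups. For a regular cardinal $\theta$, $M\in\mathbf K$ is $\theta$-indecomposable if whenever $\langle M_i:i<\theta\rangle$ is a $\subseteq$-increasing sequence of members of $\mathbf K$ with union $M$, then $M=M_i$ for some $i<\theta$. *)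

theory Defs
  imports Main
begin

text \<open>A vocabulary tau is given by function symbols (type 'f) with arities ar
  (constants are 0-ary function symbols) and relation symbols (type 'r) with
  arities rar.  A tau-structure with elements in type 'a is a universe together
  with interpretations; only the values on tuples from the universe matter.\<close>

record ('a, 'f, 'r) struc =
  dom :: "'a set"
  fn  :: "'f \<Rightarrow> 'a list \<Rightarrow> 'a"
  rl  :: "'r \<Rightarrow> 'a list \<Rightarrow> bool"

definition is_struc :: "('f \<Rightarrow> nat) \<Rightarrow> ('a, 'f, 'r) struc \<Rightarrow> bool" where
  "is_struc ar M \<longleftrightarrow>
     (\<forall>f xs. length xs = ar f \<and> set xs \<subseteq> dom M \<longrightarrow> fn M f xs \<in> dom M)"

definition struc_iso ::
  "('f \<Rightarrow> nat) \<Rightarrow> ('r \<Rightarrow> nat) \<Rightarrow> ('a \<Rightarrow> 'a) \<Rightarrow> ('a, 'f, 'r) struc \<Rightarrow> ('a, 'f, 'r) struc \<Rightarrow> bool" where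
  "struc_iso ar rar h M N \<longleftrightarrow>
     bij_betw h (dom M) (dom N) \<and>
     (\<forall>f xs. length xs = ar f \<and> set xs \<subseteq> dom M \<longrightarrow> h (fn M f xs) = fn N f (map h xs)) \<and>
     (\<forall>r xs. length xs = rar r \<and> set xs \<subseteq> dom M \<longrightarrow> (rl M r xs \<longleftrightarrow> rl N r (map h xs)))"

definition substruc ::
  "('f \<Rightarrow> nat) \<Rightarrow> ('r \<Rightarrow> nat) \<Rightarrow> ('a, 'f, 'r) struc \<Rightarrow> ('a, 'f, 'r) struc \<Rightarrow> bool" where
  "substruc ar rar M N \<longleftrightarrow>
     is_struc ar M \<and> is_struc ar N \<and> dom M \<subseteq> dom N \<and>
     (\<forall>f xs. length xs = ar f \<and> set xs \<subseteq> dom M \<longrightarrow> fn M f xs = fn N f xs) \<and>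
     (\<forall>r xs. length xs = rar r \<and> set xs \<subseteq> dom M \<longrightarrow> (rl M r xs \<longleftrightarrow> rl N r xs))"

inductive_set gen :: "('f \<Rightarrow> nat) \<Rightarrow> ('a, 'f, 'r) struc \<Rightarrow> 'a set \<Rightarrow> 'a set"
  for ar M X where
  gen_base: "x \<in> X \<Longrightarrow> x \<in> gen ar M X"
| gen_step: "length xs = ar f \<Longrightarrow> \<forall>x\<in>set xs. x \<in> gen ar M X \<Longrightarrow> fn M f xs \<in> gen ar M X"

definition restr :: "('a, 'f, 'r) struc \<Rightarrow> 'a set \<Rightarrow> ('a, 'f, 'r) struc" where
  "restr M A = \<lparr>dom = A, fn = fn M, rl = rl M\<rparr>"

definition universal_class ::
  "('f \<Rightarrow> nat) \<Rightarrow> ('r \<Rightarrow> nat) \<Rightarrow> (('a, 'f, 'r) struc \<Rightarrow> bool) \<Rightarrow> bool" where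
  "universal_class ar rar K \<longleftrightarrow>
     (\<forall>M. K M \<longrightarrow> is_struc ar M) \<and>
     (\<forall>M N h. K M \<and> is_struc ar N \<and> struc_iso ar rar h M N \<longrightarrow> K N) \<and>
     (\<forall>M. is_struc ar M \<longrightarrow>
        (K M \<longleftrightarrow> (\<forall>X. finite X \<and> X \<subseteq> dom M \<longrightarrow> K (restr M (gen ar M X)))))"

definition lf_group :: "('f \<Rightarrow> nat) \<Rightarrow> 'f \<Rightarrow> 'f \<Rightarrow> 'f \<Rightarrow> ('a, 'f, 'r) struc \<Rightarrow> bool" where
  "lf_group ar m iv e G \<longleftrightarrow>
     is_struc ar G \<and>
     (\<forall>x\<in>dom G. \<forall>y\<in>dom G. \<forall>z\<in>dom G.
        fn G m [fn G m [x, y], z] = fn G m [x, fn G m [y, z]]) \<and>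
     (\<forall>x\<in>dom G. fn G m [fn G e [], x] = x \<and> fn G m [x, fn G e []] = x) \<and>
     (\<forall>x\<in>dom G. fn G m [fn G iv [x], x] = fn G e [] \<and> fn G m [x, fn G iv [x]] = fn G e []) \<and>
     (\<forall>X. finite X \<and> X \<subseteq> dom G \<longrightarrow> finite (gen ar G X))"

definition group_vocab :: "('f \<Rightarrow> nat) \<Rightarrow> ('r \<Rightarrow> nat) \<Rightarrow> 'f \<Rightarrow> 'f \<Rightarrow> 'f \<Rightarrow> bool" where
  "group_vocab ar rar m iv e \<longleftrightarrow>
     (UNIV :: 'f set) = {m, iv, e} \<and> m \<noteq> iv \<and> m \<noteq> e \<and> iv \<noteq> e \<and>
     ar m = 2 \<and> ar iv = 1 \<and> ar e = 0 \<and> (UNIV :: 'r set) = {}"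

text \<open>th is a regular cardinal, represented as a cardinal well-order (initial
  ordinal); sequences <M_i : i < theta> are indexed by Field th.  The union of the
  increasing chain equals M iff the universe of M is the union of the universes
  and every M_i is a substructure of M.\<close>
definition indecomposable ::
  "('f \<Rightarrow> nat) \<Rightarrow> ('r \<Rightarrow> nat) \<Rightarrow> (('a, 'f, 'r) struc \<Rightarrow> bool) \<Rightarrow> 'i rel \<Rightarrow> ('a, 'f, 'r) struc \<Rightarrow> bool" where
  "indecomposable ar rar K th M \<longleftrightarrow>
     (\<forall>Ms :: 'i \<Rightarrow> ('a, 'f, 'r) struc.
        (\<forall>i\<in>Field th. K (Ms i)) \<and>
        (\<forall>i j. (i, j) \<in> th \<longrightarrow> substruc ar rar (Ms i) (Ms j)) \<and>
        dom M = (\<Union>i\<in>Field th. dom (Ms i)) \<and>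
        (\<forall>i\<in>Field th. substruc ar rar (Ms i) M)
      \<longrightarrow> (\<exists>i\<in>Field th. dom (Ms i) = dom M))"

definition is_cofinality :: "'i rel \<Rightarrow> 'a set \<Rightarrow> bool" where
  "is_cofinality th A \<longleftrightarrow> Card_order th \<and>
     (\<exists>C. C \<subseteq> Field (card_of A) \<and> cofinal C (card_of A) \<and>
          ordIso2 (card_of (Field th)) (card_of C) \<and>
          (\<forall>C'. C' \<subseteq> Field (card_of A) \<and> cofinal C' (card_of A) \<longrightarrow>
                 ordLeq3 (card_of C) (card_of C')))"

definition strong_limit :: "'a set \<Rightarrow> bool" where
  "strong_limit A \<longleftrightarrow> infinite A \<and>
     (\<forall>X. X \<subseteq> A \<and> ordLess2 (card_of X) (card_of A) \<longrightarrow> ordLess2 (card_of (Pow X)) (card_of A))"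

definition singular :: "'i rel \<Rightarrow> 'a set \<Rightarrow> bool" where
  "singular th A \<longleftrightarrow> infinite A \<and> is_cofinality th A \<and> ordLess2 (card_of (Field th)) (card_of A)"

end

theory Submission
  imports Defs
begin

(* Let mu = |N| and kappa = cf mu < mu.  Enumerating a cofinal subset of mu of order type kappa
   cuts N into an increasing kappa-chain of subsets of size < mu; closing each under the fewer
   than mu function symbols keeps it below mu, giving a kappa-chain of substructures N_i with
   union N.  Both classes are closed under substructures, so for a kappa-indecomposable M <= N
   the chain of the M \<inter> N_i forces M <= N_i for some i.  Hence every such M lies in one of
   kappa many power sets P(N_i), each of size < mu because mu is a strong limit, and there are
   at most mu of them. *)

unbundle cardinal_syntax

lemma (in wo_rel) bounded_imp_not_cofinal:
  assumes "a \<in> Field r" and "\<forall>d\<in>D. (d, a) \<in> r"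
  shows "\<not> cofinal D r"
  using assms ANTISYM unfolding cofinal_def antisym_def by blast

lemma (in wo_rel) not_cofinal_imp_bounded:
  assumes "D \<subseteq> Field r" and "\<not> cofinal D r" and "x \<in> Field r"
  obtains a where "a \<in> Field r" "(x, a) \<in> r" "\<forall>d\<in>D. (d, a) \<in> r"
proof -
  obtain b where b: "b \<in> Field r" "\<forall>d\<in>D. b = d \<or> (b, d) \<notin> r"
    using assms(2) unfolding cofinal_def by blast
  have "\<forall>d\<in>D. (d, b) \<in> r"
  proof
    fix d assume "d \<in> D"
    show "(d, b) \<in> r"
    proof (cases "d = b")
      case True
      then show ?thesis using b(1) REFL unfolding refl_on_def by blast
    next
      case False
      then have "(b, d) \<notin> r" using b(2) \<open>d \<in> D\<close> by auto
      then show ?thesis using TOTALS b(1) assms(1) \<open>d \<in> D\<close> by blast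
    qed
  qed
  then have "\<forall>d\<in>D. (d, max2 b x) \<in> r"
    using max2_greater[OF b(1) assms(3)] TRANS unfolding trans_def by blast
  moreover have "max2 b x \<in> Field r"
    using max2_among[OF b(1) assms(3)] b(1) assms(3) by auto
  ultimately show thesis
    using that max2_greater[OF b(1) assms(3)] by blast
qed

lemma (in wo_rel) finite_not_cofinal:
  assumes "finite D" and "D \<subseteq> Field r" and "Field r \<noteq> {}"
  shows "\<not> cofinal D r"
  using assms(1,2)
proof (induction D rule: finite_induct)
  case empty
  then show ?case using assms(3) unfolding cofinal_def by blast
next
  case (insert x D)
  then obtain a where "a \<in> Field r" "(x, a) \<in> r" "\<forall>d\<in>D. (d, a) \<in> r"
    using not_cofinal_imp_bounded by (metis insert_subset)
  then show ?case by (intro bounded_imp_not_cofinal) auto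
qed

lemma wo_rel_card_of: "wo_rel |A|"
  by (simp add: wo_rel_def card_of_Well_order)

lemma is_cofinalityE:
  assumes "is_cofinality th A"
  obtains g where "g ` Field th \<subseteq> A" and "cofinal (g ` Field th) |A|"
    and "\<And>D. D \<subseteq> A \<Longrightarrow> cofinal D |A| \<Longrightarrow> |Field th| \<le>o |D|"
proof -
  obtain C where C: "C \<subseteq> A" "cofinal C |A|" "|Field th| =o |C|"
    and C_min: "\<And>D. D \<subseteq> A \<Longrightarrow> cofinal D |A| \<Longrightarrow> |C| \<le>o |D|"
    using assms unfolding is_cofinality_def Field_card_of by blast
  obtain g where "bij_betw g (Field th) C"
    using C(3) card_of_ordIso by blast
  then have "g ` Field th = C" by (rule bij_betw_imp_surj_on)
  show thesis
  proof (rule that)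
    show "g ` Field th \<subseteq> A" and "cofinal (g ` Field th) |A|"
      using C \<open>g ` Field th = C\<close> by auto
    show "|Field th| \<le>o |D|" if "D \<subseteq> A" and "cofinal D |A|" for D
      using ordIso_ordLeq_trans[OF C(3) C_min[OF that]] .
  qed
qed

lemma is_cofinality_infinite:
  assumes "is_cofinality th A" and "infinite A"
  shows "infinite (Field th)"
proof
  assume "finite (Field th)"
  obtain g where "g ` Field th \<subseteq> A" "cofinal (g ` Field th) |A|"
    using assms(1) by (rule is_cofinalityE)
  moreover have "A \<noteq> {}" using assms(2) by blast
  ultimately show False
    using wo_rel.finite_not_cofinal[OF wo_rel_card_of] \<open>finite (Field th)\<close>
    by (metis Field_card_of finite_imageI)
qed

lemma cofinality_chain:
  assumes "is_cofinality th A"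
  obtains T where "\<And>i. T i \<subseteq> A" and "relChain th T" and "A \<subseteq> (\<Union>i\<in>Field th. T i)"
    and "\<And>i. i \<in> Field th \<Longrightarrow> |T i| <o |A|"
proof -
  obtain g where g: "g ` Field th \<subseteq> A" "cofinal (g ` Field th) |A|"
    and g_min: "\<And>D. D \<subseteq> A \<Longrightarrow> cofinal D |A| \<Longrightarrow> |Field th| \<le>o |D|"
    using assms by (rule is_cofinalityE) (rule that)
  have th: "Card_order th" using assms unfolding is_cofinality_def by blast
  then have "Well_order th" unfolding card_order_on_def by blast
  then have th_refl: "Refl th" and th_trans: "trans th"
    by (simp_all add: order_on_defs)
  interpret r: wo_rel "|A|" by (rule wo_rel_card_of)
  define T where "T i = (\<Union>j\<in>under th i. underS |A| (g j))" for i
  show thesis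
  proof
    show "T i \<subseteq> A" for i
      unfolding T_def by (auto dest: underS_Field simp: Field_card_of)
    show "relChain th T"
      unfolding relChain_def T_def using under_incr[OF th_trans] by blast
    show "A \<subseteq> (\<Union>i\<in>Field th. T i)"
    proof
      fix x assume "x \<in> A"
      then obtain j where j: "j \<in> Field th" "x \<noteq> g j" "(x, g j) \<in> |A|"
        using g(2) unfolding cofinal_def Field_card_of by blast
      have "j \<in> under th j"
        using j(1) th_refl unfolding under_def refl_on_def by blast
      then show "x \<in> (\<Union>i\<in>Field th. T i)"
        using j unfolding T_def underS_def by blast
    qed
    fix i assume i: "i \<in> Field th"
    have "|g ` underS th i| \<le>o |underS th i|" by (rule card_of_image)
    also have "|underS th i| <o th" using card_of_underS[OF th i] .
    also have "th =o |Field th|" using card_of_Field_ordIso[OF th] ordIso_symmetric by blast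
    finally have small: "|g ` underS th i| <o |Field th|" .
    have D: "g ` underS th i \<subseteq> Field |A|"
      using g(1) Order_Relation.underS_Field[of th i] by (auto simp: Field_card_of)
    have "\<not> cofinal (g ` underS th i) |A|"
      using g_min small D not_ordLess_ordLeq by (metis Field_card_of)
    moreover have "g i \<in> Field |A|" using g(1) i by (auto simp: Field_card_of)
    ultimately obtain a where a: "a \<in> Field |A|" "(g i, a) \<in> |A|" "\<forall>d\<in>g ` underS th i. (d, a) \<in> |A|"
      using r.not_cofinal_imp_bounded[OF D] by blast
    have "(g j, a) \<in> |A|" if "j \<in> under th i" for j
      using a that unfolding under_def underS_def by (cases "j = i") auto
    then have "underS |A| (g j) \<subseteq> underS |A| a" if "j \<in> under th i" for j
      using underS_incr[OF r.TRANS r.ANTISYM] that by blast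
    then have "T i \<subseteq> underS |A| a"
      unfolding T_def by blast
    then have "|T i| \<le>o |underS |A| a|" by (rule card_of_mono1)
    also have "|underS |A| a| <o |A|"
      using card_of_underS[OF card_of_Card_order a(1)] .
    finally show "|T i| <o |A|" .
  qed
qed

lemma restr_simps [simp]:
  "dom (restr M S) = S" "fn (restr M S) = fn M" "rl (restr M S) = rl M"
  "restr (restr M S) T = restr M T"
  by (simp_all add: restr_def)

lemma gen_least:
  assumes "X \<subseteq> S" and "is_struc ar (restr N S)"
  shows "gen ar N X \<subseteq> S"
proof
  fix x assume "x \<in> gen ar N X"
  then show "x \<in> S"
  proof induction
    case (gen_base x)
    then show ?case using assms(1) by blast
  next
    case (gen_step xs f)
    then have "set xs \<subseteq> S" by blast
    then show ?case using gen_step.hyps(1) assms(2) unfolding is_struc_def by simp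
  qed
qed

lemma is_struc_restr_gen: "is_struc ar (restr N (gen ar N X))"
  unfolding is_struc_def by (auto intro: gen.gen_step)

lemma gen_subset_dom: "is_struc ar N \<Longrightarrow> X \<subseteq> dom N \<Longrightarrow> gen ar N X \<subseteq> dom N"
  by (rule gen_least) (simp_all add: is_struc_def)

lemma gen_mono: "X \<subseteq> Y \<Longrightarrow> gen ar N X \<subseteq> gen ar N Y"
  by (rule gen_least) (auto intro: gen.gen_base is_struc_restr_gen)

lemma gen_cong:
  assumes "fn M = fn M'"
  shows "gen ar M X = gen ar M' X"
proof -
  have "gen ar M X \<subseteq> gen ar M' X" if "fn M = fn M'" for M M'
  proof
    fix x assume "x \<in> gen ar M X"
    then show "x \<in> gen ar M' X"
    proof induction
      case (gen_step xs f)
      then have "fn M' f xs \<in> gen ar M' X" by (intro gen.gen_step) auto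
      then show ?case using that by simp
    qed (rule gen.gen_base)
  qed
  from this[OF assms] this[OF assms[symmetric]] show ?thesis by (rule subset_antisym)
qed

lemma gen_restr [simp]: "gen ar (restr M S) X = gen ar M X"
  by (rule gen_cong) simp

lemma card_of_lists_ordLeq_infinite:
  assumes B: "infinite B" and G: "|G| \<le>o |B|"
  shows "|lists G| \<le>o |B|"
proof -
  have B_card: "Card_order |B|" by (rule card_of_Card_order)
  have B_Field: "infinite (Field (card_of B))" using B by (simp add: Field_card_of)
  have length_n: "card_of {xs. set xs \<subseteq> G \<and> length xs = n} \<le>o |B|" for n
  proof (induction n)
    case 0
    have "{xs. set xs \<subseteq> G \<and> length xs = 0} = {[]}" by auto
    then show ?case using card_of_singl_ordLeq[OF infinite_imp_nonempty[OF B]] by simp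
  next
    case (Suc n)
    have "card_of {xs. set xs \<subseteq> G \<and> length xs = Suc n}
        \<le>o card_of ({xs. set xs \<subseteq> G \<and> length xs = n} \<times> G)"
      unfolding lists_length_Suc_eq by (rule card_of_image)
    also have "card_of ({xs. set xs \<subseteq> G \<and> length xs = n} \<times> G) \<le>o |B|"
      using card_of_Times_ordLeq_infinite_Field[OF B_Field Suc.IH G B_card] .
    finally show ?case .
  qed
  have nat: "|UNIV :: nat set| \<le>o |B|" using B infinite_iff_card_of_nat by blast
  have "card_of (\<Union>n. {xs. set xs \<subseteq> G \<and> length xs = n}) \<le>o |B|"
    by (rule card_of_UNION_ordLeq_infinite[OF B nat]) (simp add: length_n)
  moreover have "lists G = (\<Union>n. {xs. set xs \<subseteq> G \<and> length xs = n})" by auto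
  ultimately show ?thesis by simp
qed

primrec gen_stage :: "('a, 'f, 'r) struc \<Rightarrow> 'a set \<Rightarrow> nat \<Rightarrow> 'a set" where
  "gen_stage N X 0 = X"
| "gen_stage N X (Suc n) =
     gen_stage N X n \<union> (\<lambda>(f, xs). fn N f xs) ` (UNIV \<times> lists (gen_stage N X n))"

lemma gen_stage_mono: "m \<le> n \<Longrightarrow> gen_stage N X m \<subseteq> gen_stage N X n"
  by (rule lift_Suc_mono_le[of "gen_stage N X"]) auto

lemma gen_subset_UN_gen_stage: "gen ar N X \<subseteq> (\<Union>n. gen_stage N X n)"
proof (rule gen_least)
  have list_in_stage: "\<exists>n. set xs \<subseteq> gen_stage N X n"
    if "set xs \<subseteq> (\<Union>n. gen_stage N X n)" for xs
    using that
  proof (induction xs)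
    case (Cons x xs)
    then obtain m n where "x \<in> gen_stage N X m" "set xs \<subseteq> gen_stage N X n" by auto
    moreover have "gen_stage N X m \<subseteq> gen_stage N X (max m n)"
      and "gen_stage N X n \<subseteq> gen_stage N X (max m n)"
      by (simp_all add: gen_stage_mono)
    ultimately have "set (x # xs) \<subseteq> gen_stage N X (max m n)" by auto
    then show ?case ..
  qed simp
  show "is_struc ar (restr N (\<Union>n. gen_stage N X n))"
    unfolding is_struc_def
  proof (intro allI impI)
    fix f xs assume "length xs = ar f \<and> set xs \<subseteq> dom (restr N (\<Union>n. gen_stage N X n))"
    then obtain n where "set xs \<subseteq> gen_stage N X n" using list_in_stage[of xs] by auto
    then have "fn N f xs \<in> gen_stage N X (Suc n)" by force
    then show "fn (restr N (\<Union>n. gen_stage N X n)) f xs \<in> dom (restr N (\<Union>n. gen_stage N X n))"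
      unfolding restr_simps by (rule UN_I[OF UNIV_I])
  qed
  show "X \<subseteq> (\<Union>n. gen_stage N X n)"
    using UN_upper[of 0 UNIV "gen_stage N X"] by simp
qed

lemma card_of_gen_stage:
  assumes B: "infinite B" and X: "|X| \<le>o |B|" and F: "|UNIV :: 'f set| \<le>o |B|"
  shows "|gen_stage (N :: ('a, 'f, 'r) struc) X n| \<le>o |B|"
proof (induction n)
  case 0
  then show ?case using X by simp
next
  case (Suc n)
  have B_card: "Card_order |B|" by (rule card_of_Card_order)
  have B_Field: "infinite (Field (card_of B))" using B by (simp add: Field_card_of)
  have "card_of ((\<lambda>(f, xs). fn N f xs) ` (UNIV \<times> lists (gen_stage N X n)))
      \<le>o card_of ((UNIV :: 'f set) \<times> lists (gen_stage N X n))"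
    by (rule card_of_image)
  also have "card_of ((UNIV :: 'f set) \<times> lists (gen_stage N X n)) \<le>o |B|"
    using card_of_Times_ordLeq_infinite_Field[OF B_Field F
        card_of_lists_ordLeq_infinite[OF B Suc.IH] B_card] .
  finally show ?case
    using card_of_Un_ordLeq_infinite_Field[OF B_Field Suc.IH _ B_card] by simp
qed

lemma card_of_gen_ordLeq_infinite:
  assumes B: "infinite B" and X: "|X| \<le>o |B|" and F: "|UNIV :: 'f set| \<le>o |B|"
  shows "|gen (ar :: 'f \<Rightarrow> nat) N X| \<le>o |B|"
proof -
  have "|\<Union>n. gen_stage N X n| \<le>o |B|"
    using card_of_UNION_ordLeq_infinite[OF B infinite_iff_card_of_nat[THEN iffD1, OF B]]
      card_of_gen_stage[OF B X F] by blast
  then show ?thesis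
    using card_of_mono1[OF gen_subset_UN_gen_stage] ordLeq_transitive by blast
qed

lemma card_of_gen_ordLess:
  assumes nat: "|UNIV :: nat set| <o |A|" and F: "|UNIV :: 'f set| <o |A|" and X: "|X| <o |A|"
  shows "|gen (ar :: 'f \<Rightarrow> nat) N X| <o |A|"
proof -
  let ?B = "X <+> (UNIV :: 'f set) <+> (UNIV :: nat set)"
  have A: "infinite A" using nat infinite_iff_card_of_nat ordLess_imp_ordLeq by blast
  have "|gen ar N X| \<le>o |?B|"
    by (intro card_of_gen_ordLeq_infinite card_of_Plus1 ordLeq_transitive[OF card_of_Plus1 card_of_Plus2])
      simp
  also have "|?B| <o |A|"
    using card_of_Plus_ordLess_infinite[OF A X card_of_Plus_ordLess_infinite[OF A F nat]] .
  finally show ?thesis .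
qed

lemma substruc_restr:
  "is_struc ar M \<Longrightarrow> is_struc ar (restr M S) \<Longrightarrow> S \<subseteq> dom M \<Longrightarrow> substruc ar rar (restr M S) M"
  unfolding substruc_def by simp

lemma is_struc_restr_Int:
  assumes "substruc ar rar M N" and "is_struc ar (restr N S)"
  shows "is_struc ar (restr M (dom M \<inter> S))"
  using assms unfolding substruc_def is_struc_def by auto

definition hereditary_class :: "('f \<Rightarrow> nat) \<Rightarrow> (('a, 'f, 'r) struc \<Rightarrow> bool) \<Rightarrow> bool" where
  "hereditary_class ar K \<longleftrightarrow> (\<forall>M. K M \<longrightarrow> is_struc ar M) \<and>
     (\<forall>M S. K M \<and> S \<subseteq> dom M \<and> is_struc ar (restr M S) \<longrightarrow> K (restr M S))"

lemma lf_group_hereditary: "hereditary_class ar (lf_group ar m iv e)"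
  unfolding hereditary_class_def lf_group_def by (simp add: subset_iff)

lemma universal_class_hereditary:
  assumes K: "universal_class ar rar K"
  shows "hereditary_class ar K"
proof -
  have K_struc: "K M \<Longrightarrow> is_struc ar M" for M
    using K unfolding universal_class_def by blast
  have K_iff: "K M \<longleftrightarrow> (\<forall>X. finite X \<and> X \<subseteq> dom M \<longrightarrow> K (restr M (gen ar M X)))"
    if "is_struc ar M" for M
    using K that unfolding universal_class_def by blast
  have "K (restr M S)" if "K M" "S \<subseteq> dom M" "is_struc ar (restr M S)" for M S
    using K_iff[OF K_struc[OF \<open>K M\<close>]] K_iff[OF \<open>is_struc ar (restr M S)\<close>] that by auto
  with K_struc show ?thesis unfolding hereditary_class_def by blast
qed

lemma finite_ordLess_infinite_set: "finite X \<Longrightarrow> infinite A \<Longrightarrow> |X| <o |A|"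
  using finite_ordLess_infinite[of "|X|" "|A|"] by (simp add: Field_card_of card_of_well_order_on)

lemma lf_group_or_universal_class:
  fixes ar :: "'f \<Rightarrow> nat" and rar :: "'r \<Rightarrow> nat"
  assumes K: "(\<exists>m iv e. group_vocab ar rar m iv e \<and> K = lf_group ar m iv e)
            \<or> (universal_class ar rar K \<and> |(UNIV :: 'f set) <+> (UNIV :: 'r set)| <o |A| )"
    and A: "infinite A"
  shows "hereditary_class ar K" and "|UNIV :: 'f set| <o |A|"
proof -
  show "hereditary_class ar K"
    using K lf_group_hereditary universal_class_hereditary by metis
  show "|UNIV :: 'f set| <o |A|"
    using K
  proof
    \<comment> \<open>\<open>group_vocab\<close> even asks for \<open>(UNIV :: 'r set) = {}\<close>, so this case is in fact vacuous\<close>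
    assume "\<exists>m iv e. group_vocab ar rar m iv e \<and> K = lf_group ar m iv e"
    then obtain m iv e where UNIV_eq: "(UNIV :: 'f set) = {m, iv, e}"
      unfolding group_vocab_def by blast
    have "finite (UNIV :: 'f set)" unfolding UNIV_eq by simp
    then show ?thesis using A by (rule finite_ordLess_infinite_set)
  qed (use card_of_Plus1 ordLeq_ordLess_trans in blast)
qed

lemma small_substructure_chain:
  fixes ar :: "'f \<Rightarrow> nat"
  assumes cof: "is_cofinality th (dom N)" and N: "is_struc ar N"
    and nat: "|UNIV :: nat set| <o |dom N|" and vocab: "|UNIV :: 'f set| <o |dom N|"
  obtains Ns where "relChain th Ns" and "\<And>i. is_struc ar (restr N (Ns i))"
    and "\<And>i. Ns i \<subseteq> dom N" and "dom N \<subseteq> (\<Union>i\<in>Field th. Ns i)"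
    and "\<And>i. i \<in> Field th \<Longrightarrow> |Ns i| <o |dom N|"
proof -
  obtain T where T: "\<And>i. T i \<subseteq> dom N" "relChain th T" "dom N \<subseteq> (\<Union>i\<in>Field th. T i)"
    "\<And>i. i \<in> Field th \<Longrightarrow> |T i| <o |dom N|"
    using cof by (rule cofinality_chain) (rule that)
  show thesis
  proof
    show "relChain th (\<lambda>i. gen ar N (T i))"
      using T(2) gen_mono unfolding relChain_def by blast
    show "dom N \<subseteq> (\<Union>i\<in>Field th. gen ar N (T i))"
      by (intro order_trans[OF T(3)] UN_mono) (auto intro: gen.gen_base)
    show "is_struc ar (restr N (gen ar N (T i)))" for i
      by (rule is_struc_restr_gen)
    show "gen ar N (T i) \<subseteq> dom N" for i
      using gen_subset_dom[OF N T(1)] .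
    show "|gen ar N (T i)| <o |dom N|" if "i \<in> Field th" for i
      by (rule card_of_gen_ordLess[OF nat vocab T(4)[OF that]])
  qed
qed

lemma indecomposable_subset_chain:
  assumes K: "hereditary_class ar K" "K M"
    and MN: "substruc ar rar M N" and M: "indecomposable ar rar K th M"
    and chain: "relChain th Ns" and closed: "\<And>i. is_struc ar (restr N (Ns i))"
    and cover: "dom N \<subseteq> (\<Union>i\<in>Field th. Ns i)"
  obtains i where "i \<in> Field th" and "dom M \<subseteq> Ns i"
proof -
  define Ms where "Ms i = restr M (dom M \<inter> Ns i)" for i
  have M_struc: "is_struc ar M" using MN unfolding substruc_def by blast
  have Ms_struc: "is_struc ar (Ms i)" for i
    unfolding Ms_def using is_struc_restr_Int[OF MN closed] .
  have "substruc ar rar (Ms i) (Ms j)" if "(i, j) \<in> th" for i j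
  proof -
    have "dom M \<inter> Ns i \<subseteq> dom M \<inter> Ns j" using chain that unfolding relChain_def by blast
    then show ?thesis
      using substruc_restr[of ar "Ms j" "dom M \<inter> Ns i" rar] Ms_struc unfolding Ms_def by simp
  qed
  moreover have "\<forall>i\<in>Field th. K (Ms i)" and "\<forall>i\<in>Field th. substruc ar rar (Ms i) M"
    using K Ms_struc substruc_restr[OF M_struc] unfolding Ms_def hereditary_class_def by auto
  moreover have "dom M = (\<Union>i\<in>Field th. dom (Ms i))"
    using MN cover unfolding Ms_def substruc_def by auto
  ultimately obtain i where "i \<in> Field th" "dom (Ms i) = dom M"
    using M unfolding indecomposable_def by blast
  then show thesis using that unfolding Ms_def by auto
qed

lemma strong_limit_card_of_UNION_Pow:
  assumes A: "strong_limit A" and I: "|I| \<le>o |A|"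
    and X: "\<And>i. i \<in> I \<Longrightarrow> X i \<subseteq> A" "\<And>i. i \<in> I \<Longrightarrow> |X i| <o |A|"
  shows "|\<Union>i\<in>I. Pow (X i)| \<le>o |A|"
proof (rule card_of_UNION_ordLeq_infinite[OF _ I])
  show "infinite A" using A unfolding strong_limit_def by blast
  show "\<forall>i\<in>I. |Pow (X i)| \<le>o |A|"
  proof
    fix i assume "i \<in> I"
    then have "|Pow (X i)| <o |A|" using A X unfolding strong_limit_def by blast
    then show "|Pow (X i)| \<le>o |A|" by (rule ordLess_imp_ordLeq)
  qed
qed

theorem claim1p6:
  fixes ar :: "'f \<Rightarrow> nat" and rar :: "'r \<Rightarrow> nat"
    and K :: "('a, 'f, 'r) struc \<Rightarrow> bool"
    and N :: "('a, 'f, 'r) struc" and th :: "'i rel"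
  assumes sing: "singular th (dom N)"
    and slim: "strong_limit (dom N)"
    and K: "(\<exists>m iv e. group_vocab ar rar m iv e \<and> K = lf_group ar m iv e)
            \<or> (universal_class ar rar K \<and>
               ordLess2 (card_of ((UNIV :: 'f set) <+> (UNIV :: 'r set))) (card_of (dom N)))"
    and N: "K N"
  shows "ordLeq3
           (card_of (dom ` {M. substruc ar rar M N \<and> K M \<and>
                               ordLess2 (card_of (dom M)) (card_of (dom N)) \<and>
                               indecomposable ar rar K th M}))
           (card_of (dom N))"
proof -
  have cof: "is_cofinality th (dom N)" and th_small: "|Field th| <o |dom N|"
    and N_inf: "infinite (dom N)"
    using sing unfolding singular_def by blast+
  then have nat_small: "|UNIV :: nat set| <o |dom N|"
    using is_cofinality_infinite infinite_iff_card_of_nat ordLeq_ordLess_trans by blast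
  have K_hered: "hereditary_class ar K" and vocab_small: "|UNIV :: 'f set| <o |dom N|"
    using lf_group_or_universal_class[OF K N_inf] by simp_all
  have N_struc: "is_struc ar N" using K_hered N unfolding hereditary_class_def by blast
  obtain Ns where Ns: "relChain th Ns" "\<And>i. is_struc ar (restr N (Ns i))"
    "\<And>i. Ns i \<subseteq> dom N" "dom N \<subseteq> (\<Union>i\<in>Field th. Ns i)"
    "\<And>i. i \<in> Field th \<Longrightarrow> |Ns i| <o |dom N|"
    by (rule small_substructure_chain[OF cof N_struc nat_small vocab_small]) (rule that)
  have "dom M \<in> (\<Union>i\<in>Field th. Pow (Ns i))"
    if M: "substruc ar rar M N" "K M" "indecomposable ar rar K th M" for M
  proof -
    obtain i where "i \<in> Field th" "dom M \<subseteq> Ns i"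
      by (rule indecomposable_subset_chain[OF K_hered M(2,1,3) Ns(1,2,4)])
    then show ?thesis by blast
  qed
  then have "dom ` {M. substruc ar rar M N \<and> K M \<and> |dom M| <o |dom N| \<and>
                       indecomposable ar rar K th M} \<subseteq> (\<Union>i\<in>Field th. Pow (Ns i))"
    by blast
  moreover have "|\<Union>i\<in>Field th. Pow (Ns i)| \<le>o |dom N|"
    using slim ordLess_imp_ordLeq[OF th_small] Ns(3,5) by (rule strong_limit_card_of_UNION_Pow)
  ultimately show ?thesis
    by (rule ordLeq_transitive[OF card_of_mono1])
qed

end
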